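(* For real $0\le x<\pi$ and every integer $r\ge2$, $$\log\mathcal C_r\left(\frac x{2\pi}\right)=\left(\frac x{2\pi}\right)^{r-1}\left(\log\left(\cos\frac x2\right)+(r-1)\sum_{n=1}^\infty\frac{\lambda(2n)}{n(2n+r-1)}\left(\frac x{\pi}\right)^{2n}\right).$$
   Context: For an integer $r\ge2$ let $P_r(y)=(1-y)\exp\left(y+\frac{y^2}{2}+\cdots+\frac{y^r}{r}\right)$. The multiple cosine function of Kurokawa–Koyama of order $r\ge2$ is $\mathcal C_r(x)=\prod_{n\ge1,\ n\text{ odd}}\left\{P_r\left(\frac{x}{n/2}\right)P_r\left(-\frac{x}{n/2}\right)^{(-1)^{r-1}}\right\}^{(n/2)^{r-1}}$, interpreted as $\mathcal C_r(x)=\exp\Big(\sum_{n\ge1,\,n\text{ odd}}(n/2)^{r-1}\big[\operatorname{Log}P_r(2x/n)+(-1)^{r-1}\operatorname{Log}P_r(-2x/n)\big]\Big)$, where $\operatorname{Log}P_r(y):=\operatorname{Log}(1-y)+y+\frac{y^2}{2}+\cdots+\frac{y^r}{r}$ with $\operatorname{Log}$ the principal branch. The series converges and defines a holomorphic function on $D=\mathbb C\setminus\big((-\infty,-\tfrac12]\cup[\tfrac12,\infty)\big)$, positive on $(-\tfrac12,\tfrac12)$; $\log\mathcal C_r(x)$ denotes the exponent above (the real logarithm for real $|x|<\tfrac12$). $\lambda(s)=\sum_{n=0}^\infty\frac1{(2n+1)^s}=(1-2^{-s})\zeta(s)$ is the Dirichlet lambda function. *)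

theory Defs
  imports "HOL-Analysis.Analysis"
begin

definition LogP :: "nat \<Rightarrow> complex \<Rightarrow> complex" where
  "LogP r y = Ln (1 - y) + (\<Sum>j=1..r. y ^ j / of_nat j)"

definition logC :: "nat \<Rightarrow> complex \<Rightarrow> complex" where
  "logC r x = (\<Sum>k. (of_nat (2*k+1) / 2) ^ (r - 1) *
       (LogP r (2 * x / of_nat (2*k+1)) + (-1) ^ (r - 1) * LogP r (- 2 * x / of_nat (2*k+1))))"

definition dirichlet_lambda :: "real \<Rightarrow> real" where
  "dirichlet_lambda s = (\<Sum>n. 1 / (real (2*n+1)) powr s)"

end

theory Submission
  imports Defs
begin

text \<open>Put u = x / (pi (2k + 1)). The k-th term of log C_r(x / (2 pi)) is
  ((2k + 1) / 2)^(r-1) (log P_r(u) + (-1)^(r-1) log P_r(-u)), and in the power series of the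
  bracket only the powers u^(r+1+2n) survive, with coefficient
  -2 / (r+1+2n) = -1 / (n+1) + (r-1) / ((n+1) (2n+r+1)).
  The first part resums to u^(r-1) log(1 - u^2), whose sum over k is log cos(x/2) by the sine
  product formula. The second part is a nonnegative double series, so the sums over k and n may be
  interchanged, and summing over k first yields lambda(2n+2) (x/pi)^(2n+2).\<close>

definition logP :: "nat \<Rightarrow> real \<Rightarrow> real" where
  "logP r y = ln (1 - y) + (\<Sum>j=1..r. y ^ j / of_nat j)"

lemma LogP_of_real:
  assumes "y < 1"
  shows "LogP r (complex_of_real y) = complex_of_real (logP r y)"
  using assms by (simp add: LogP_def logP_def flip: Ln_of_real)

lemma logP_sums:
  fixes y :: real
  assumes "\<bar>y\<bar> < 1"
  shows "(\<lambda>n. - (y ^ (n + Suc r)) / of_nat (n + Suc r)) sums logP r y"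
proof -
  have "(\<lambda>n. - (y ^ n) / of_nat n) sums ln (1 - y)"
    using ln_series'[of "- y"] assms by simp
  moreover have "(\<Sum>n<Suc r. - (y ^ n) / of_nat n) = - (\<Sum>j=1..r. y ^ j / of_nat j)"
  proof -
    have "{..<Suc r} = insert 0 {1..r}" by auto
    then show ?thesis by (simp add: sum_negf)
  qed
  ultimately show ?thesis
    using sums_iff_shift[of "\<lambda>n. - (y ^ n) / of_nat n" "Suc r"] by (simp add: logP_def)
qed

lemma logP_0 [simp]: "logP 0 y = ln (1 - y)"
  by (simp add: logP_def)

lemma ln_one_minus_square_sums:
  fixes u :: real
  assumes "\<bar>u\<bar> < 1"
  shows "(\<lambda>m. - (u ^ (2 * (m + 1))) / real (m + 1)) sums ln (1 - u\<^sup>2)"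
proof -
  have "\<bar>u\<^sup>2\<bar> < 1" using assms by (simp add: abs_square_less_1)
  from logP_sums[OF this, of 0] show ?thesis
    by (simp only: logP_0 power_mult One_nat_def)
qed

lemma logP_odd_part_sums:
  fixes u :: real
  assumes "\<bar>u\<bar> < 1" and "1 \<le> r"
  shows "(\<lambda>n. - 2 * u ^ (2 * n + Suc r) / of_nat (2 * n + Suc r))
           sums (logP r u + (-1) ^ (r - 1) * logP r (- u))"
proof -
  have sign: "(-1) ^ (r - 1) * (- u) ^ (n + Suc r) = (-1) ^ n * u ^ (n + Suc r)" for n
  proof -
    have "(r - 1) + (n + Suc r) = n + 2 * r" using assms(2) by simp
    then have "(-1::real) ^ (r - 1) * (-1) ^ (n + Suc r) = (-1) ^ n"
      by (metis power_add neg_one_even_power even_mult_iff even_numeral mult_1_right)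
    then show ?thesis by (metis (no_types, lifting) mult.assoc power_minus)
  qed
  have "(\<lambda>n. - (u ^ (n + Suc r)) / of_nat (n + Suc r)
          + (-1) ^ (r - 1) * (- ((- u) ^ (n + Suc r)) / of_nat (n + Suc r)))
          sums (logP r u + (-1) ^ (r - 1) * logP r (- u))"
    using assms(1) by (intro sums_add sums_mult logP_sums) auto
  also have "(\<lambda>n. - (u ^ (n + Suc r)) / of_nat (n + Suc r)
          + (-1) ^ (r - 1) * (- ((- u) ^ (n + Suc r)) / of_nat (n + Suc r)))
      = (\<lambda>n. - (1 + (-1) ^ n) * u ^ (n + Suc r) / of_nat (n + Suc r))"
  proof
    fix n
    have odd_term: "(-1) ^ (r - 1) * (- ((- u) ^ (n + Suc r)) / of_nat (n + Suc r))
        = - ((-1) ^ n * u ^ (n + Suc r)) / of_nat (n + Suc r)"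
      by (simp only: sign[symmetric] mult_minus_right times_divide_eq_right)
    show "- (u ^ (n + Suc r)) / of_nat (n + Suc r)
          + (-1) ^ (r - 1) * (- ((- u) ^ (n + Suc r)) / of_nat (n + Suc r))
      = - (1 + (-1) ^ n) * u ^ (n + Suc r) / of_nat (n + Suc r)"
      by (simp only: odd_term)
         (simp add: algebra_simps flip: diff_divide_distrib add_divide_distrib)
  qed
  finally have "(\<lambda>n. - (1 + (-1) ^ n) * u ^ (n + Suc r) / of_nat (n + Suc r))
          sums (logP r u + (-1) ^ (r - 1) * logP r (- u))" .
  moreover have "1 + (-1) ^ n = (0::real)" if "n \<notin> range (\<lambda>n. 2 * n)" for n
    using that by (cases "even n") (auto elim!: evenE)
  ultimately show ?thesis
    by (subst (asm) sums_mono_reindex[of "\<lambda>n. 2 * n", symmetric]) (auto simp: strict_mono_def add_ac)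
qed

lemma logP_odd_part_eq:
  fixes u :: real
  assumes "\<bar>u\<bar> < 1" and "1 \<le> r"
  shows "logP r u + (-1) ^ (r - 1) * logP r (- u) =
    u ^ (r - 1) * (ln (1 - u\<^sup>2) + real (r - 1) *
      (\<Sum>m. u ^ (2 * (m + 1)) / (real (m + 1) * real (2 * (m + 1) + r - 1))))"
proof -
  define b where "b m = u ^ (2 * (m + 1)) / (real (m + 1) * real (2 * (m + 1) + r - 1))" for m
  have ln_sums: "(\<lambda>m. - (u ^ (2 * (m + 1))) / real (m + 1)) sums ln (1 - u\<^sup>2)"
    using assms(1) by (rule ln_one_minus_square_sums)
  have "summable b"
  proof (rule summable_comparison_test')
    show "summable (\<lambda>m. u ^ (2 * (m + 1)) / real (m + 1))"
      using summable_minus[OF sums_summable[OF ln_sums]] by simp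
    show "norm (b m) \<le> u ^ (2 * (m + 1)) / real (m + 1)" for m
    proof -
      have "0 \<le> u ^ (2 * (m + 1))" by (rule zero_le_even_power) simp
      moreover have "real (m + 1) \<le> real (m + 1) * real (2 * (m + 1) + r - 1)"
        using assms(2) by simp
      ultimately show ?thesis by (simp add: b_def frac_le)
    qed
  qed
  then have "(\<lambda>m. u ^ (r - 1) * (- (u ^ (2 * (m + 1))) / real (m + 1) + real (r - 1) * b m))
      sums (u ^ (r - 1) * (ln (1 - u\<^sup>2) + real (r - 1) * suminf b))"
    by (intro sums_mult sums_add ln_sums summable_sums)
  also have "(\<lambda>m. u ^ (r - 1) * (- (u ^ (2 * (m + 1))) / real (m + 1) + real (r - 1) * b m))
      = (\<lambda>m. - 2 * u ^ (2 * m + Suc r) / of_nat (2 * m + Suc r))"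
  proof
    fix m
    define U where "U = u ^ (2 * (m + 1))"
    have coeff: "- 1 / real (m + 1) + real (r - 1) / (real (m + 1) * real (2 * (m + 1) + r - 1))
        = - 2 / real (2 * m + Suc r)"
    proof -
      have "- 1 / p + (q - 2 * p) / (p * q) = - 2 / q" if "p > 0" "q > 0" for p q :: real
        using that by (simp add: field_simps)
      from this[of "real (m + 1)" "real (2 * m + Suc r)"]
      have "- 1 / real (m + 1) + (real (2 * m + Suc r) - 2 * real (m + 1))
          / (real (m + 1) * real (2 * m + Suc r)) = - 2 / real (2 * m + Suc r)"
        by simp
      moreover have "real (2 * (m + 1) + r - 1) = real (2 * m + Suc r)"
        and "real (r - 1) = real (2 * m + Suc r) - 2 * real (m + 1)"
        using assms(2) by auto
      ultimately show ?thesis by (simp only:)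
    qed
    have "2 * m + Suc r = (r - 1) + 2 * (m + 1)" using assms(2) by simp
    then have power: "u ^ (2 * m + Suc r) = u ^ (r - 1) * U"
      unfolding U_def by (metis power_add)
    have "u ^ (r - 1) * (- U / real (m + 1) + real (r - 1) * b m)
        = u ^ (r - 1) * U * (- 1 / real (m + 1)
            + real (r - 1) / (real (m + 1) * real (2 * (m + 1) + r - 1)))"
      by (simp add: b_def U_def algebra_simps)
    also have "\<dots> = - 2 * u ^ (2 * m + Suc r) / of_nat (2 * m + Suc r)"
      by (simp only: coeff power) simp
    finally show "u ^ (r - 1) * (- (u ^ (2 * (m + 1))) / real (m + 1) + real (r - 1) * b m)
        = - 2 * u ^ (2 * m + Suc r) / of_nat (2 * m + Suc r)"
      unfolding U_def .
  qed
  finally show ?thesis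
    using logP_odd_part_sums[OF assms] sums_unique2 unfolding b_def by blast
qed

lemma cos_product_formula_real:
  fixes w :: real
  assumes "sin (pi * w / 2) \<noteq> 0"
  shows "(\<lambda>n. \<Prod>k<n. 1 - (w / real (2 * k + 1))\<^sup>2) \<longlonglongrightarrow> cos (pi * w / 2)"
proof -
  define P where "P z n = (\<Prod>k=1..n. 1 - z\<^sup>2 / of_nat k ^ 2)" for z :: real and n
  define Q where "Q n = (\<Prod>k<n. 1 - (w / real (2 * k + 1))\<^sup>2)" for n
  have w: "w \<noteq> 0" using assms by auto
  \<comment> \<open>The even-indexed factors of the product for \<open>sin (pi w)\<close> form the product for
    \<open>sin (pi w / 2)\<close>, so the odd-indexed ones converge to \<open>sin (pi w) / (2 sin (pi w / 2))\<close>.\<close>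
  have even_odd_split: "P w (2 * n) = P (w / 2) n * Q n" for n
  proof (induction n)
    case (Suc n)
    have "P w (2 * Suc n) = P w (2 * n) * (1 - (w / real (2 * n + 1))\<^sup>2) * (1 - w\<^sup>2 / of_nat (2 * n + 2) ^ 2)"
      by (simp add: P_def prod.cl_ivl_Suc power_divide)
    also have "1 - w\<^sup>2 / of_nat (2 * n + 2) ^ 2 = 1 - (w / 2)\<^sup>2 / of_nat (Suc n) ^ 2"
      by (simp add: power_divide power_mult_distrib field_simps power2_eq_square)
    also have "P w (2 * n) * (1 - (w / real (2 * n + 1))\<^sup>2) * (1 - (w / 2)\<^sup>2 / of_nat (Suc n) ^ 2)
        = (P (w / 2) n * (1 - (w / 2)\<^sup>2 / of_nat (Suc n) ^ 2)) * (Q n * (1 - (w / real (2 * n + 1))\<^sup>2))"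
      using Suc.IH by (simp add: mult_ac)
    also have "\<dots> = P (w / 2) (Suc n) * Q (Suc n)"
      by (simp add: P_def Q_def prod.cl_ivl_Suc)
    finally show ?case .
  qed (simp add: P_def Q_def)
  have "(\<lambda>n. P w (2 * n)) \<longlonglongrightarrow> sin (pi * w) / (pi * w)"
    using LIMSEQ_subseq_LIMSEQ[OF sin_product_formula_real'[OF w], of "\<lambda>n. 2 * n"]
    by (simp add: P_def strict_mono_def o_def)
  moreover have half: "(\<lambda>n. P (w / 2) n) \<longlonglongrightarrow> sin (pi * w / 2) / (pi * w / 2)"
    using sin_product_formula_real'[of "w / 2"] w by (simp add: P_def)
  moreover have "sin (pi * w / 2) / (pi * w / 2) \<noteq> 0" using assms w by simp
  ultimately have "(\<lambda>n. P w (2 * n) / P (w / 2) n)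
      \<longlonglongrightarrow> (sin (pi * w) / (pi * w)) / (sin (pi * w / 2) / (pi * w / 2))"
    by (intro tendsto_divide)
  also have "(sin (pi * w) / (pi * w)) / (sin (pi * w / 2) / (pi * w / 2)) = cos (pi * w / 2)"
    using sin_double[of "pi * w / 2"] assms w by (simp add: field_simps)
  finally have "(\<lambda>n. P w (2 * n) / P (w / 2) n) \<longlonglongrightarrow> cos (pi * w / 2)" .
  moreover have "eventually (\<lambda>n. P w (2 * n) / P (w / 2) n = Q n) sequentially"
    using tendsto_imp_eventually_ne[OF half \<open>sin (pi * w / 2) / (pi * w / 2) \<noteq> 0\<close>]
    by eventually_elim (simp add: even_odd_split)
  ultimately show ?thesis
    unfolding Q_def by (rule Lim_transform_eventually)
qed

lemma ln_cos_sums: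
  fixes w :: real
  assumes "\<bar>w\<bar> < 1"
  shows "(\<lambda>k. ln (1 - (w / real (2 * k + 1))\<^sup>2)) sums ln (cos (pi * w / 2))"
proof (cases "w = 0")
  case False
  have abs_bound: "\<bar>pi * w\<bar> < pi" using assms by (simp add: abs_mult)
  then have bound: "- (pi / 2) < pi * w / 2" "pi * w / 2 < pi / 2"
    by (auto simp: abs_less_iff)
  have factor_pos: "0 < 1 - (w / real (2 * k + 1))\<^sup>2" for k
  proof -
    have "\<bar>w / real (2 * k + 1)\<bar> < 1"
      using assms by (simp add: divide_less_eq)
    then show ?thesis by (simp add: abs_square_less_1)
  qed
  have "sin (pi * w / 2) \<noteq> 0"
    using False abs_bound by (subst sin_zero_pi_iff) auto
  moreover have "cos (pi * w / 2) > 0"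
    using bound by (rule cos_gt_zero_pi)
  ultimately have "(\<lambda>n. ln (\<Prod>k<n. 1 - (w / real (2 * k + 1))\<^sup>2)) \<longlonglongrightarrow> ln (cos (pi * w / 2))"
    by (intro tendsto_ln cos_product_formula_real) auto
  then show ?thesis
    using factor_pos by (simp add: sums_def ln_prod less_le)
qed simp

lemma dirichlet_lambda_sums:
  assumes "2 \<le> p"
  shows "(\<lambda>k. 1 / real (2 * k + 1) ^ p) sums dirichlet_lambda (real p)"
proof -
  have "summable (\<lambda>k. 1 / real (2 * k + 1) ^ p)"
  proof (rule summable_comparison_test')
    show "summable (\<lambda>k. inverse (real (Suc k) ^ p))"
      using inverse_power_summable[OF assms] by (subst summable_Suc_iff)
    show "norm (1 / real (2 * k + 1) ^ p) \<le> inverse (real (Suc k) ^ p)" for k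
      by (simp add: divide_inverse le_imp_inverse_le power_mono del: of_nat_Suc)
  qed
  then show ?thesis
    unfolding dirichlet_lambda_def by (simp add: powr_realpow summable_sums)
qed

lemma sums_swap_nonneg:
  fixes f :: "nat \<Rightarrow> nat \<Rightarrow> real"
  assumes nonneg: "\<And>k m. 0 \<le> f k m"
    and rows: "\<And>k. f k sums B k" and "summable B"
    and columns: "\<And>m. (\<lambda>k. f k m) sums G m"
  shows "G sums suminf B"
proof -
  define h where "h = (\<lambda>(k, m). f k m)"
  have h_rows: "((\<lambda>m. h (k, m)) has_sum B k) UNIV" for k
    unfolding h_def using rows nonneg by (simp add: sums_nonneg_imp_has_sum)
  have "B k \<ge> 0" for k
    using rows[of k] nonneg by (metis sums_iff suminf_nonneg)
  then have B: "(B has_sum suminf B) UNIV"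
    using \<open>summable B\<close> by (simp add: summable_sums sums_nonneg_imp_has_sum)
  have "h summable_on UNIV \<times> UNIV"
    using summable_on_SigmaI[where A = UNIV and B = "\<lambda>_. UNIV" and f = h and g = B] h_rows B nonneg
    by (auto simp: h_def summable_on_def)
  then obtain S where S: "(h has_sum S) (UNIV \<times> UNIV)"
    by (auto simp: summable_on_def)
  have "(B has_sum S) UNIV"
    using has_sum_SigmaD[OF S] h_rows by blast
  then have "S = suminf B"
    using B has_sum_unique by blast
  have h_columns: "((\<lambda>k. h (k, m)) has_sum G m) UNIV" for m
    unfolding h_def using columns nonneg by (simp add: sums_nonneg_imp_has_sum)
  have "(G has_sum S) UNIV"
    using has_sum_SigmaD[OF has_sum_swap[THEN iffD1, OF S]] h_columns by auto
  then show ?thesis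
    using \<open>S = suminf B\<close> has_sum_imp_sums by blast
qed

lemma sums_dirichlet_lambda_power_series:
  fixes w :: real and c :: "nat \<Rightarrow> real"
  assumes "\<bar>w\<bar> < 1" and c_nonneg: "\<And>m. 0 \<le> c m" and c_le: "\<And>m. c m \<le> 1 / real (m + 1)"
  shows "(\<lambda>k. \<Sum>m. c m * (w / real (2 * k + 1)) ^ (2 * (m + 1)))
           sums (\<Sum>m. c m * dirichlet_lambda (real (2 * (m + 1))) * w ^ (2 * (m + 1)))"
proof -
  define u where "u k = w / real (2 * k + 1)" for k
  define f where "f k m = c m * u k ^ (2 * (m + 1))" for k m
  define B where "B k = (\<Sum>m. f k m)" for k
  define G where "G m = c m * dirichlet_lambda (real (2 * (m + 1))) * w ^ (2 * (m + 1))" for m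
  have u: "\<bar>u k\<bar> < 1" for k
    using assms(1) by (simp add: u_def divide_less_eq)
  have even_power_nonneg: "0 \<le> u k ^ (2 * (m + 1))" for k m
    by (rule zero_le_even_power) simp
  have f_nonneg: "0 \<le> f k m" for k m
    unfolding f_def using c_nonneg even_power_nonneg by simp
  have ln_sums: "(\<lambda>m. u k ^ (2 * (m + 1)) / real (m + 1)) sums - ln (1 - (u k)\<^sup>2)" for k
    using sums_minus[OF ln_one_minus_square_sums[OF u]] by simp
  have f_le: "f k m \<le> u k ^ (2 * (m + 1)) / real (m + 1)" for k m
    using mult_right_mono[OF c_le even_power_nonneg] by (simp add: f_def)
  have rows: "f k sums B k" for k
  proof -
    have "norm (f k m) \<le> u k ^ (2 * (m + 1)) / real (m + 1)" for m
      using f_nonneg[of k m] f_le[of k m] by simp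
    then have "summable (f k)"
      by (rule summable_comparison_test'[OF sums_summable[OF ln_sums[of k]]])
    then show ?thesis unfolding B_def by (rule summable_sums)
  qed
  have "summable B"
  proof (rule summable_comparison_test')
    show "summable (\<lambda>k. - ln (1 - (u k)\<^sup>2))"
      using summable_minus[OF sums_summable[OF ln_cos_sums[OF assms(1)]]] by (simp add: u_def)
    show "norm (B k) \<le> - ln (1 - (u k)\<^sup>2)" for k
      using sums_le[OF f_le rows ln_sums] suminf_nonneg[OF sums_summable[OF rows] f_nonneg]
      by (simp add: B_def)
  qed
  have columns: "(\<lambda>k. f k m) sums G m" for m
  proof -
    have "(\<lambda>k. c m * w ^ (2 * (m + 1)) * (1 / real (2 * k + 1) ^ (2 * (m + 1))))
        sums (c m * w ^ (2 * (m + 1)) * dirichlet_lambda (real (2 * (m + 1))))"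
      by (intro sums_mult dirichlet_lambda_sums) simp
    then show ?thesis
      by (simp add: f_def u_def G_def power_divide mult_ac)
  qed
  have "suminf G = suminf B"
    using sums_swap_nonneg[OF f_nonneg rows \<open>summable B\<close> columns] by (rule sums_unique[symmetric])
  then have "B sums suminf G"
    using \<open>summable B\<close> by (simp add: summable_sums)
  then show ?thesis
    unfolding B_def [abs_def] f_def u_def G_def [abs_def] .
qed

lemma logC_term_of_real:
  fixes t :: real
  assumes "\<bar>2 * t\<bar> < 1" and "1 \<le> n" and "1 \<le> r"
  shows "(of_nat n / 2) ^ (r - 1) * (LogP r (2 * complex_of_real t / of_nat n)
           + (-1) ^ (r - 1) * LogP r (- 2 * complex_of_real t / of_nat n))
    = complex_of_real (t ^ (r - 1) * (ln (1 - (2 * t / real n)\<^sup>2) + real (r - 1) *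
        (\<Sum>m. (2 * t / real n) ^ (2 * (m + 1)) / (real (m + 1) * real (2 * (m + 1) + r - 1)))))"
proof -
  define u where "u = 2 * t / real n"
  have "\<bar>u\<bar> \<le> \<bar>2 * t\<bar>"
    using assms(2) by (simp add: u_def abs_div divide_le_eq mult_le_cancel_left1)
  then have u: "\<bar>u\<bar> < 1" using assms(1) by linarith
  have arg: "2 * complex_of_real t / of_nat n = complex_of_real u"
    and neg_arg: "- 2 * complex_of_real t / of_nat n = complex_of_real (- u)"
    by (simp_all add: u_def)
  have scale: "(of_nat n / 2 :: complex) ^ (r - 1) = complex_of_real ((real n / 2) ^ (r - 1))"
    by simp
  have LogP_u: "LogP r (complex_of_real u) = complex_of_real (logP r u)"
    by (rule LogP_of_real) (use u in linarith)
  have LogP_neg_u: "LogP r (complex_of_real (- u)) = complex_of_real (logP r (- u))"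
    by (rule LogP_of_real) (use u in linarith)
  have "(of_nat n / 2) ^ (r - 1) * (LogP r (2 * complex_of_real t / of_nat n)
           + (-1) ^ (r - 1) * LogP r (- 2 * complex_of_real t / of_nat n))
      = complex_of_real ((real n / 2) ^ (r - 1) * (logP r u + (-1) ^ (r - 1) * logP r (- u)))"
    unfolding arg neg_arg scale LogP_u LogP_neg_u by simp
  also have "(real n / 2) ^ (r - 1) * (logP r u + (-1) ^ (r - 1) * logP r (- u))
      = (real n / 2 * u) ^ (r - 1) * (ln (1 - u\<^sup>2) + real (r - 1) *
          (\<Sum>m. u ^ (2 * (m + 1)) / (real (m + 1) * real (2 * (m + 1) + r - 1))))"
    by (simp only: logP_odd_part_eq[OF u assms(3)] power_mult_distrib mult.assoc)
  also have "real n / 2 * u = t"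
    using assms(2) by (simp add: u_def)
  finally show ?thesis
    unfolding u_def .
qed

lemma logC_of_real:
  fixes t :: real
  assumes "\<bar>2 * t\<bar> < 1" and "1 \<le> r"
  shows "logC r (complex_of_real t) =
    complex_of_real (t ^ (r - 1) * (ln (cos (pi * t)) + real (r - 1) *
      (\<Sum>m. dirichlet_lambda (real (2 * (m + 1))) / (real (m + 1) * real (2 * (m + 1) + r - 1))
             * (2 * t) ^ (2 * (m + 1)))))"
proof -
  define c where "c m = 1 / (real (m + 1) * real (2 * (m + 1) + r - 1))" for m
  define T where "T k = t ^ (r - 1) * (ln (1 - (2 * t / real (2 * k + 1))\<^sup>2) + real (r - 1) *
    (\<Sum>m. (2 * t / real (2 * k + 1)) ^ (2 * (m + 1)) / (real (m + 1) * real (2 * (m + 1) + r - 1))))"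
    for k
  have c_mult: "c m * v = v / (real (m + 1) * real (2 * (m + 1) + r - 1))" for m v
    by (simp add: c_def)
  have "(\<lambda>k. ln (1 - (2 * t / real (2 * k + 1))\<^sup>2)) sums ln (cos (pi * t))"
    using ln_cos_sums[OF assms(1)] by simp
  moreover have "(\<lambda>k. \<Sum>m. c m * (2 * t / real (2 * k + 1)) ^ (2 * (m + 1)))
      sums (\<Sum>m. c m * dirichlet_lambda (real (2 * (m + 1))) * (2 * t) ^ (2 * (m + 1)))"
    using sums_dirichlet_lambda_power_series[OF assms(1), of c] by (simp add: c_def frac_le)
  ultimately have T_sums: "T sums (t ^ (r - 1) * (ln (cos (pi * t)) + real (r - 1) *
      (\<Sum>m. c m * dirichlet_lambda (real (2 * (m + 1))) * (2 * t) ^ (2 * (m + 1)))))"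
    unfolding T_def c_mult by (intro sums_mult sums_add)
  have "(of_nat (2 * k + 1) / 2) ^ (r - 1) *
      (LogP r (2 * complex_of_real t / of_nat (2 * k + 1))
        + (-1) ^ (r - 1) * LogP r (- 2 * complex_of_real t / of_nat (2 * k + 1)))
      = complex_of_real (T k)" for k
    unfolding T_def by (rule logC_term_of_real[OF assms(1) _ assms(2)]) simp
  then have "logC r (complex_of_real t) = (\<Sum>k. complex_of_real (T k))"
    unfolding logC_def by (simp only:)
  also have "\<dots> = complex_of_real (t ^ (r - 1) * (ln (cos (pi * t)) + real (r - 1) *
      (\<Sum>m. c m * dirichlet_lambda (real (2 * (m + 1))) * (2 * t) ^ (2 * (m + 1)))))"
    using sums_of_real[OF T_sums] by (rule sums_unique[symmetric])
  also have "(\<Sum>m. c m * dirichlet_lambda (real (2 * (m + 1))) * (2 * t) ^ (2 * (m + 1)))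
      = (\<Sum>m. dirichlet_lambda (real (2 * (m + 1))) / (real (m + 1) * real (2 * (m + 1) + r - 1))
          * (2 * t) ^ (2 * (m + 1)))"
    by (simp add: c_def)
  finally show ?thesis .
qed

theorem theorem2p8:
  fixes x :: real and r :: nat
  assumes "0 \<le> x" and "x < pi" and "2 \<le> r"
  shows "logC r (complex_of_real (x / (2*pi))) =
    complex_of_real ((x / (2*pi)) ^ (r - 1) *
      (ln (cos (x / 2)) + real (r - 1) *
        (\<Sum>m. dirichlet_lambda (real (2 * (m+1))) / (real (m+1) * real (2*(m+1) + r - 1))
               * (x / pi) ^ (2 * (m+1)))))"
proof -
  have "\<bar>2 * (x / (2 * pi))\<bar> < 1"
    using assms(1,2) by (simp add: divide_less_eq)
  moreover have "pi * (x / (2 * pi)) = x / 2" and "2 * (x / (2 * pi)) = x / pi"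
    by simp_all
  ultimately show ?thesis
    using logC_of_real[of "x / (2 * pi)" r] assms(3) by (simp only:)
qed

end
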